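(* Let $n_1=n_1(n)$ and $n_2=n_2(n)$ satisfy $1\ll n_1\leq n_2$, and let $G=G(n_1,n_2,p)$ with $p=\frac{d}{\sqrt{n_1n_2}}$ for a constant $d<1$. Then with high probability $g(G)=0$, i.e., $G$ is planar.
   Context: $G(n_1,n_2,p)$ denotes the binomial random bipartite graph: a random subgraph of the complete bipartite graph $K_{n_1,n_2}$ with partition classes $N_1,N_2$ of sizes $n_1,n_2$, each of the $n_1n_2$ edges included independently with probability $p$. $g(G)$ is the genus of $G$, the smallest $g$ such that $G$ embeds in the orientable surface of genus $g$. The notation $f\ll g$ means $f/g\to 0$; $1\ll n_1$ means $n_1\to\infty$. "With high probability" (whp) means with probability tending to $1$ as $n_1\to\infty$. *)

theory Defs
  imports "HOL-Analysis.Analysis" "HOL-Probability.Probability"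
begin

text \<open>For finite graphs this is equivalent to genus 0.\<close>

definition planar_graph :: "'a set \<Rightarrow> 'a set set \<Rightarrow> bool" where
  "planar_graph V E \<longleftrightarrow>
     (\<exists>(pos :: 'a \<Rightarrow> real^2) (\<gamma> :: 'a set \<Rightarrow> real \<Rightarrow> real^2).
        inj_on pos V \<and>
        (\<forall>e\<in>E. arc (\<gamma> e) \<and> {pathstart (\<gamma> e), pathfinish (\<gamma> e)} = pos ` e \<and>
                 path_image (\<gamma> e) \<inter> pos ` V = pos ` e) \<and>
        (\<forall>e\<in>E. \<forall>e'\<in>E. e \<noteq> e' \<longrightarrow>
                 path_image (\<gamma> e) \<inter> path_image (\<gamma> e') \<subseteq> pos ` (e \<inter> e')))"

definition bip_vertices :: "nat \<Rightarrow> nat \<Rightarrow> (nat + nat) set" where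
  "bip_vertices n1 n2 = Inl ` {..<n1} \<union> Inr ` {..<n2}"

definition bip_edges :: "nat \<Rightarrow> nat \<Rightarrow> (nat \<times> nat \<Rightarrow> bool) \<Rightarrow> (nat + nat) set set" where
  "bip_edges n1 n2 X = {{Inl i, Inr j} | i j. i < n1 \<and> j < n2 \<and> X (i, j)}"

definition random_bip :: "nat \<Rightarrow> nat \<Rightarrow> real \<Rightarrow> (nat \<times> nat \<Rightarrow> bool) pmf" where
  "random_bip n1 n2 p = Pi_pmf ({..<n1} \<times> {..<n2}) False (\<lambda>_. bernoulli_pmf p)"

end

theory Submission
  imports Defs
begin

definition simple_graph :: "'a set \<Rightarrow> 'a set set \<Rightarrow> bool" where
  "simple_graph V E \<longleftrightarrow> (\<forall>e\<in>E. \<exists>x y. x \<noteq> y \<and> e = {x, y} \<and> x \<in> V \<and> y \<in> V)"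

lemma simple_graph_edgeE:
  assumes "simple_graph V E" "e \<in> E" "x \<in> e"
  obtains y where "y \<noteq> x" "e = {x, y}" "x \<in> V" "y \<in> V"
proof -
  from assms(1,2) obtain a b where ab: "a \<noteq> b" "e = {a, b}" "a \<in> V" "b \<in> V"
    unfolding simple_graph_def by blast
  then consider "x = a" | "x = b"
    using assms(3) by blast
  then show thesis
  proof cases
    case 1
    then show thesis using that[of b] ab by simp
  next
    case 2
    then show thesis using that[of a] ab by (simp add: insert_commute)
  qed
qed

lemma simple_graph_edge_subset: "simple_graph V E \<Longrightarrow> e \<in> E \<Longrightarrow> e \<subseteq> V"
  unfolding simple_graph_def by fastforce

lemma simple_graph_edge_neq:
  assumes "simple_graph V E" "{x, y} \<in> E"
  shows "x \<noteq> y"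
proof -
  from assms obtain a b where "a \<noteq> b" "{x, y} = {a, b}"
    unfolding simple_graph_def by blast
  then show ?thesis
    by (auto simp: doubleton_eq_iff)
qed

lemma simple_graph_Diff:
  assumes "simple_graph V E" "E' \<subseteq> E" "\<forall>e\<in>E'. e \<inter> A = {}"
  shows "simple_graph (V - A) E'"
  unfolding simple_graph_def
proof
  fix e assume e: "e \<in> E'"
  then have "e \<in> E"
    using assms(2) by blast
  then obtain x y where xy: "x \<noteq> y" "e = {x, y}" "x \<in> V" "y \<in> V"
    using assms(1) unfolding simple_graph_def by blast
  moreover have "x \<notin> A" "y \<notin> A"
    using assms(3) e xy(2) by auto
  ultimately show "\<exists>x y. x \<noteq> y \<and> e = {x, y} \<and> x \<in> V - A \<and> y \<in> V - A"
    by (intro exI[of _ x] exI[of _ y]) simp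
qed

lemma simple_graph_degree_cases:
  assumes "simple_graph V E"
  obtains (isolated) v where "v \<in> V" "\<forall>e\<in>E. v \<notin> e"
    | (leaf) v u where "v \<in> V" "{e\<in>E. v \<in> e} = {{v, u}}"
    | (deg2) "\<forall>v\<in>V. \<exists>u w. u \<noteq> w \<and> {v, u} \<in> E \<and> {v, w} \<in> E"
proof -
  have two: "\<exists>u w. u \<noteq> w \<and> {v, u} \<in> E \<and> {v, w} \<in> E"
    if e: "e \<in> E" "v \<in> e" and not_leaf: "\<And>u. {e\<in>E. v \<in> e} \<noteq> {{v, u}}" for v e
  proof -
    obtain u where u: "e = {v, u}"
      using simple_graph_edgeE[OF assms e] by metis
    then have "\<exists>e'. e' \<in> E \<and> v \<in> e' \<and> e' \<noteq> {v, u}"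
      using e not_leaf[of u] by auto
    then obtain e' where e': "e' \<in> E" "v \<in> e'" "e' \<noteq> {v, u}"
      by blast
    then obtain w where "e' = {v, w}"
      using simple_graph_edgeE[OF assms e'(1,2)] by metis
    then show ?thesis
      using e(1) u e' by (intro exI[of _ u] exI[of _ w]) auto
  qed
  show thesis
  proof (cases "\<exists>v\<in>V. \<forall>e\<in>E. v \<notin> e")
    case True
    then show thesis
      using isolated by metis
  next
    case no_isolated: False
    show thesis
    proof (cases "\<exists>v\<in>V. \<exists>u. {e\<in>E. v \<in> e} = {{v, u}}")
      case True
      then show thesis
        using leaf by metis
    next
      case no_leaf: False
      have "\<exists>u w. u \<noteq> w \<and> {v, u} \<in> E \<and> {v, w} \<in> E" if v: "v \<in> V" for v
      proof -
        obtain e where "e \<in> E" "v \<in> e"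
          using no_isolated v by auto
        moreover have "{e\<in>E. v \<in> e} \<noteq> {{v, u}}" for u
          using no_leaf v by auto
        ultimately show ?thesis
          by (rule two)
      qed
      then show thesis
        using deg2 by auto
    qed
  qed
qed

definition graph_path :: "'a set set \<Rightarrow> (nat \<Rightarrow> 'a) \<Rightarrow> nat \<Rightarrow> bool" where
  "graph_path E f k \<longleftrightarrow> inj_on f {..k} \<and> (\<forall>t<k. {f t, f (Suc t)} \<in> E)"

lemma graph_path_Cons:
  assumes "graph_path E f k" "y \<notin> f ` {..k}" "{y, f 0} \<in> E"
  shows "graph_path E (case_nat y f) (Suc k)"
proof -
  have "inj_on (case_nat y f) (Suc ` {..k})"
    using assms(1) unfolding graph_path_def inj_on_def by auto
  moreover have "case_nat y f ` Suc ` {..k} = f ` {..k}"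
    by (auto simp: image_image)
  ultimately have "inj_on (case_nat y f) {..Suc k}"
    using assms(2) by (simp add: atMost_Suc_eq_insert_0)
  moreover have "{case_nat y f t, case_nat y f (Suc t)} \<in> E" if "t < Suc k" for t
    using assms(1,3) that unfolding graph_path_def by (cases t) auto
  ultimately show ?thesis
    unfolding graph_path_def by blast
qed

lemma image_case_nat_atMost: "case_nat y f ` {..Suc k} = insert y (f ` {..k})"
  by (auto simp: atMost_Suc_eq_insert_0 image_image)

lemma image_reindex: "\<sigma> ` A = A \<Longrightarrow> (\<lambda>t. f (\<sigma> t)) ` A = f ` A"
  using image_image[of f \<sigma> A] by simp

lemma image_rev_atMost: "(\<lambda>t. k - t) ` {..k} = {..k :: nat}"
proof (rule endo_inj_surj)
  show "inj_on (\<lambda>t. k - t) {..k}"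
    by (auto simp: inj_on_def)
qed auto

lemma graph_path_rev:
  assumes "graph_path E f k"
  shows "graph_path E (\<lambda>t. f (k - t)) k"
proof -
  have "inj_on (\<lambda>t. k - t) {..k}"
    by (auto simp: inj_on_def)
  then have "inj_on (\<lambda>t. f (k - t)) {..k}"
    using comp_inj_on[of "\<lambda>t. k - t" "{..k}" f] assms
    unfolding graph_path_def by (simp add: o_def image_rev_atMost)
  moreover have "{f (k - t), f (k - Suc t)} \<in> E" if "t < k" for t
  proof -
    have "{f (k - Suc t), f (Suc (k - Suc t))} \<in> E"
      using assms that unfolding graph_path_def by simp
    moreover have "Suc (k - Suc t) = k - t"
      using that by simp
    ultimately show ?thesis
      by (simp add: insert_commute)
  qed
  ultimately show ?thesis
    unfolding graph_path_def by blast
qed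

lemma rotate_atMost:
  assumes "i \<le> k"
  shows "inj_on (\<lambda>t. (i + t) mod Suc k) {..k}" "(\<lambda>t. (i + t) mod Suc k) ` {..k} = {..k}"
proof -
  have "s = t" if "s \<le> t" "t \<le> k" "(i + s) mod Suc k = (i + t) mod Suc k" for s t
  proof -
    have "Suc k dvd t - s"
      using that mod_eq_dvd_iff_nat[of "i + s" "i + t" "Suc k"] by simp
    moreover have "t - s < Suc k"
      using that by simp
    ultimately show ?thesis
      using that nat_dvd_not_less[of "t - s" "Suc k"] by (cases "s = t") auto
  qed
  then show inj: "inj_on (\<lambda>t. (i + t) mod Suc k) {..k}"
    unfolding inj_on_def by (metis atMost_iff nat_le_linear)
  then show "(\<lambda>t. (i + t) mod Suc k) ` {..k} = {..k}"
    by (intro endo_inj_surj) (auto simp: less_Suc_eq_le)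
qed

lemma graph_path_rotate:
  assumes "graph_path E f k" "{f k, f 0} \<in> E" "i \<le> k"
  shows "graph_path E (\<lambda>t. f ((i + t) mod Suc k)) k"
proof -
  have "inj_on (\<lambda>t. f ((i + t) mod Suc k)) {..k}"
    using comp_inj_on[of "\<lambda>t. (i + t) mod Suc k" "{..k}" f] assms(1) rotate_atMost[OF assms(3)]
    unfolding graph_path_def by (simp add: o_def)
  moreover have "{f ((i + t) mod Suc k), f ((i + Suc t) mod Suc k)} \<in> E" for t
  proof -
    define s where "s = (i + t) mod Suc k"
    have "s \<le> k" "(i + Suc t) mod Suc k = (if s = k then 0 else Suc s)"
      unfolding s_def by (auto simp: mod_Suc less_Suc_eq_le)
    then show ?thesis
      using assms(1,2) unfolding graph_path_def s_def[symmetric] by (cases "s = k") auto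
  qed
  ultimately show ?thesis
    unfolding graph_path_def by blast
qed

definition longest_path :: "'a set \<Rightarrow> 'a set set \<Rightarrow> (nat \<Rightarrow> 'a) \<Rightarrow> nat \<Rightarrow> bool" where
  "longest_path V E f k \<longleftrightarrow> graph_path E f k \<and> f ` {..k} \<subseteq> V \<and>
     (\<forall>g l. graph_path E g l \<and> g ` {..l} \<subseteq> V \<longrightarrow> l \<le> k)"

lemma longest_path_exists:
  assumes "finite V" "v \<in> V"
  obtains f k where "longest_path V E f k"
proof -
  define P where "P l \<longleftrightarrow> (\<exists>g. graph_path E g l \<and> g ` {..l} \<subseteq> V)" for l
  have "P 0"
    unfolding P_def graph_path_def using assms(2) by (intro exI[of _ "\<lambda>_. v"]) auto
  moreover have "l \<le> card V" if "P l" for l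
  proof -
    from that obtain g where "inj_on g {..l}" "g ` {..l} \<subseteq> V"
      unfolding P_def graph_path_def by blast
    then have "card {..l} \<le> card V"
      by (meson card_inj_on_le assms(1))
    then show ?thesis by simp
  qed
  ultimately obtain k where "P k" "\<forall>l. P l \<longrightarrow> l \<le> k"
    using Nat.ex_has_greatest_nat[of P 0 "card V"] by blast
  moreover from \<open>P k\<close> obtain f where "graph_path E f k" "f ` {..k} \<subseteq> V"
    unfolding P_def by blast
  ultimately show thesis
    by (intro that[of f k]) (auto simp: longest_path_def P_def)
qed

lemma longest_path_maximal:
  "longest_path V E f k \<Longrightarrow> graph_path E g l \<Longrightarrow> g ` {..l} \<subseteq> V \<Longrightarrow> l \<le> k"
  unfolding longest_path_def by simp

lemma longest_path_same_image:
  "longest_path V E f k \<Longrightarrow> graph_path E g k \<Longrightarrow> g ` {..k} = f ` {..k} \<Longrightarrow> longest_path V E g k"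
  unfolding longest_path_def by simp

lemma longest_path_rev:
  assumes "longest_path V E f k"
  shows "longest_path V E (\<lambda>t. f (k - t)) k"
proof (rule longest_path_same_image[OF assms])
  show "graph_path E (\<lambda>t. f (k - t)) k"
    using assms graph_path_rev unfolding longest_path_def by blast
  show "(\<lambda>t. f (k - t)) ` {..k} = f ` {..k}"
    using image_reindex[OF image_rev_atMost] .
qed

lemma longest_path_neighbour:
  assumes "longest_path V E f k" "simple_graph V E" "{f 0, y} \<in> E"
  shows "y \<in> f ` {..k}"
proof (rule ccontr)
  assume y: "y \<notin> f ` {..k}"
  have "graph_path E (case_nat y f) (Suc k)"
    using graph_path_Cons[OF _ y] assms(1,3) unfolding longest_path_def by (simp add: insert_commute)
  moreover have "y \<in> V"
    using simple_graph_edge_subset[OF assms(2,3)] by simp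
  then have "case_nat y f ` {..Suc k} \<subseteq> V"
    using assms(1) unfolding longest_path_def image_case_nat_atMost by simp
  ultimately show False
    using longest_path_maximal[OF assms(1)] by fastforce
qed

definition path_chord :: "'a set set \<Rightarrow> (nat \<Rightarrow> 'a) \<Rightarrow> nat \<Rightarrow> nat \<Rightarrow> nat \<Rightarrow> bool" where
  "path_chord E f k a b \<longleftrightarrow> a + 2 \<le> b \<and> b \<le> k \<and> {f a, f b} \<in> E"

definition has_path_with_two_chords :: "'a set set \<Rightarrow> bool" where
  "has_path_with_two_chords E \<longleftrightarrow>
     (\<exists>f k a b c d. graph_path E f k \<and> path_chord E f k a b \<and> path_chord E f k c d \<and> (a, b) \<noteq> (c, d))"

lemma has_path_with_two_chords_mono:
  assumes "has_path_with_two_chords E'" "E' \<subseteq> E"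
  shows "has_path_with_two_chords E"
proof -
  have "graph_path E f k" if "graph_path E' f k" for f k
    using that assms(2) unfolding graph_path_def by auto
  moreover have "path_chord E f k a b" if "path_chord E' f k a b" for f k a b
    using that assms(2) unfolding path_chord_def by auto
  ultimately show ?thesis
    using assms(1) unfolding has_path_with_two_chords_def by meson
qed

lemma path_chord_unique:
  "\<not> has_path_with_two_chords E \<Longrightarrow> graph_path E f k \<Longrightarrow> path_chord E f k a b \<Longrightarrow> path_chord E f k c d
    \<Longrightarrow> (a, b) = (c, d)"
  unfolding has_path_with_two_chords_def by blast

lemma path_chord_rev:
  "path_chord E (\<lambda>t. f (k - t)) k a b \<Longrightarrow> path_chord E f k (k - b) (k - a)"
  unfolding path_chord_def by (auto simp: insert_commute)

lemma longest_path_start_chord: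
  assumes "longest_path V E f k" "simple_graph V E" "u \<noteq> w" "{f 0, u} \<in> E" "{f 0, w} \<in> E"
  obtains b where "path_chord E f k 0 b"
proof -
  obtain i j where ij: "i \<le> k" "u = f i" "j \<le> k" "w = f j"
    using longest_path_neighbour[OF assms(1,2)] assms(4,5) by blast
  have "u \<noteq> f 0" "w \<noteq> f 0"
    using simple_graph_edge_neq[OF assms(2)] assms(4,5) by metis+
  then have "i \<noteq> 0" "j \<noteq> 0" "i \<noteq> j"
    using assms(3) ij by metis+
  then have "path_chord E f k 0 i \<or> path_chord E f k 0 j"
    unfolding path_chord_def using assms(4,5) ij by auto
  then show thesis
    using that by blast
qed

definition cycle_edges :: "(nat \<Rightarrow> 'a) \<Rightarrow> nat \<Rightarrow> 'a set set" where
  "cycle_edges f k = insert {f k, f 0} ((\<lambda>t. {f t, f (Suc t)}) ` {..<k})"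

lemma cycle_component:
  assumes "finite V" "V \<noteq> {}" "simple_graph V E" "\<not> has_path_with_two_chords E"
    and deg2: "\<forall>v\<in>V. \<exists>u w. u \<noteq> w \<and> {v, u} \<in> E \<and> {v, w} \<in> E"
  obtains f k where "graph_path E f k" "f ` {..k} \<subseteq> V" "cycle_edges f k \<subseteq> E"
    "\<forall>e\<in>E. e \<inter> f ` {..k} \<noteq> {} \<longrightarrow> e \<in> cycle_edges f k"
proof -
  obtain v where "v \<in> V"
    using assms(2) by blast
  then obtain f k where long: "longest_path V E f k"
    by (rule longest_path_exists[OF assms(1)])
  then have path: "graph_path E f k" and fV: "f ` {..k} \<subseteq> V"
    unfolding longest_path_def by auto
  have start_chord: "\<exists>b. path_chord E g k 0 b" if g: "longest_path V E g k" for g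
  proof -
    have "g 0 \<in> V"
      using g unfolding longest_path_def by auto
    then obtain u w where "u \<noteq> w" "{g 0, u} \<in> E" "{g 0, w} \<in> E"
      using deg2 by blast
    then obtain b where "path_chord E g k 0 b"
      by (rule longest_path_start_chord[OF g assms(3)])
    then show ?thesis ..

  qed
  obtain b where b: "path_chord E f k 0 b"
    using start_chord[OF long] by blast
  obtain c where "path_chord E (\<lambda>t. f (k - t)) k 0 c"
    using start_chord[OF longest_path_rev[OF long]] by blast
  then have "path_chord E f k (k - c) k"
    using path_chord_rev[of E f k 0 c] by simp
  then have "(0, b) = (k - c, k)"
    by (rule path_chord_unique[OF assms(4) path b])
  then have outer: "path_chord E f k 0 k"
    using b by simp
  then have closing: "{f k, f 0} \<in> E"
    unfolding path_chord_def by (simp add: insert_commute)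
  have "cycle_edges f k \<subseteq> E"
    using path closing unfolding cycle_edges_def graph_path_def by auto
  moreover have "\<forall>e\<in>E. e \<inter> f ` {..k} \<noteq> {} \<longrightarrow> e \<in> cycle_edges f k"
  proof (intro ballI impI)
    fix e assume "e \<in> E" "e \<inter> f ` {..k} \<noteq> {}"
    then obtain i where e: "e \<in> E" "f i \<in> e" "i \<le> k"
      by auto
    obtain y where y: "y \<noteq> f i" "e = {f i, y}"
      using simple_graph_edgeE[OF assms(3) e(1,2)] by metis
    have "y \<in> f ` {..k}"
    proof -
      define g where "g t = f ((i + t) mod Suc k)" for t
      have g_image: "g ` {..k} = f ` {..k}"
        unfolding g_def using image_reindex[OF rotate_atMost(2)[OF e(3)]] .
      have "graph_path E g k"
        unfolding g_def using graph_path_rotate[OF path closing e(3)] .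
      then have "longest_path V E g k"
        using longest_path_same_image[OF long _ g_image] by simp
      moreover have "{g 0, y} \<in> E"
        using e(1,3) y(2) unfolding g_def by simp
      ultimately have "y \<in> g ` {..k}"
        by (rule longest_path_neighbour[OF _ assms(3)])
      then show ?thesis
        using g_image by simp
    qed
    then obtain j where j: "j \<le> k" "y = f j" "i \<noteq> j"
      using y(1) by blast
    define a where "a = min i j"
    define a' where "a' = max i j"
    have e_eq: "e = {f a, f a'}"
      unfolding a_def a'_def using y j by (cases "i \<le> j") (simp_all add: insert_commute)
    have "a < a'" "a' \<le> k"
      unfolding a_def a'_def using j e(3) by auto
    show "e \<in> cycle_edges f k"
    proof (cases "a' = Suc a")
      case True
      then show "e \<in> cycle_edges f k"
        using e_eq \<open>a' \<le> k\<close> unfolding cycle_edges_def by auto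
    next
      case False
      then have "path_chord E f k a a'"
        unfolding path_chord_def using \<open>a < a'\<close> \<open>a' \<le> k\<close> e(1) e_eq by auto
      then have "(a, a') = (0, k)"
        using path_chord_unique[OF assms(4) path _ outer] by simp
      then show "e \<in> cycle_edges f k"
        using e_eq unfolding cycle_edges_def by (simp add: insert_commute)
    qed
  qed
  ultimately show thesis
    using that path fV by blast
qed

definition noncrossing_order :: "('a \<Rightarrow> real) \<Rightarrow> 'a set set \<Rightarrow> bool" where
  "noncrossing_order r E \<longleftrightarrow>
     (\<forall>e\<in>E. \<forall>e'\<in>E. \<forall>x\<in>e. \<forall>y\<in>e. \<forall>z\<in>e'. \<forall>w\<in>e'. \<not> (r x < r z \<and> r z < r y \<and> r y < r w))"

lemma noncrossing_orderD:
  "noncrossing_order r E \<Longrightarrow> e \<in> E \<Longrightarrow> e' \<in> E \<Longrightarrow> x \<in> e \<Longrightarrow> y \<in> e \<Longrightarrow> z \<in> e' \<Longrightarrow> w \<in> e'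
    \<Longrightarrow> \<not> (r x < r z \<and> r z < r y \<and> r y < r w)"
  unfolding noncrossing_order_def by blast

lemma noncrossing_order_cong:
  assumes "\<And>x. x \<in> \<Union>E \<Longrightarrow> r x = r' x"
  shows "noncrossing_order r E \<longleftrightarrow> noncrossing_order r' E"
proof -
  have "r x = r' x" if "e \<in> E" "x \<in> e" for e x
    using assms[OF UnionI[OF that]] .
  then show ?thesis
    unfolding noncrossing_order_def by simp
qed

lemma noncrossing_order_add_const: "noncrossing_order (\<lambda>x. r x + c) E \<longleftrightarrow> noncrossing_order r E"
  unfolding noncrossing_order_def by simp

lemma noncrossing_order_insert_adjacent:
  assumes "noncrossing_order r E" "r x < r y"
    and between: "\<And>z. z \<in> \<Union>(insert {x, y} E) \<Longrightarrow> \<not> (r x < r z \<and> r z < r y)"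
  shows "noncrossing_order r (insert {x, y} E)"
  unfolding noncrossing_order_def
proof (intro ballI notI)
  fix e e' a b c d
  assume ee: "e \<in> insert {x, y} E" "e' \<in> insert {x, y} E" "a \<in> e" "b \<in> e" "c \<in> e'" "d \<in> e'"
    and cross: "r a < r c \<and> r c < r b \<and> r b < r d"
  consider "e = {x, y}" | "e' = {x, y}" | "e \<in> E" "e' \<in> E"
    using ee(1,2) by blast
  then show False
  proof cases
    case 1
    then show False
      using between[of c] ee cross assms(2) by auto
  next
    case 2
    then show False
      using between[of b] ee cross assms(2) by auto
  next
    case 3
    then show False
      using noncrossing_orderD[OF assms(1) 3 ee(3-6)] cross by simp
  qed
qed

lemma noncrossing_order_Un:
  assumes "noncrossing_order r E1" "noncrossing_order r E2"
    and below: "\<And>x y. x \<in> \<Union>E1 \<Longrightarrow> y \<in> \<Union>E2 \<Longrightarrow> r x < r y"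
  shows "noncrossing_order r (E1 \<union> E2)"
  unfolding noncrossing_order_def
proof (intro ballI notI)
  fix e e' a b c d
  assume ee: "e \<in> E1 \<union> E2" "e' \<in> E1 \<union> E2" "a \<in> e" "b \<in> e" "c \<in> e'" "d \<in> e'"
    and cross: "r a < r c \<and> r c < r b \<and> r b < r d"
  consider "e \<in> E1" "e' \<in> E1" | "e \<in> E2" "e' \<in> E2" | "e \<in> E1" "e' \<in> E2" | "e \<in> E2" "e' \<in> E1"
    using ee(1,2) by blast
  then show False
  proof cases
    case 1
    then show False
      using noncrossing_orderD[OF assms(1) 1 ee(3-6)] cross by simp
  next
    case 2
    then show False
      using noncrossing_orderD[OF assms(2) 2 ee(3-6)] cross by simp
  next
    case 3
    then show False
      using below[of b c] ee cross by auto
  next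
    case 4
    then show False
      using below[of c a] ee cross by auto
  qed
qed

lemma noncrossing_order_disjoint_union:
  assumes "finite A" "finite B" "A \<inter> B = {}" "\<Union>E1 \<subseteq> A" "\<Union>E2 \<subseteq> B"
    and "inj_on r1 A" "noncrossing_order r1 E1" "inj_on r2 B" "noncrossing_order r2 E2"
  obtains r where "inj_on r (A \<union> B)" "noncrossing_order r (E1 \<union> E2)"
proof -
  define c where "c = (\<Sum>x\<in>A. \<bar>r1 x\<bar>) + (\<Sum>x\<in>B. \<bar>r2 x\<bar>) + 1"
  have below: "r1 x < r2 y + c" if "x \<in> A" "y \<in> B" for x y
  proof -
    have "\<bar>r1 x\<bar> \<le> (\<Sum>x\<in>A. \<bar>r1 x\<bar>)" "\<bar>r2 y\<bar> \<le> (\<Sum>x\<in>B. \<bar>r2 x\<bar>)"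
      using that assms(1,2) by (auto intro!: member_le_sum)
    then show ?thesis
      unfolding c_def by linarith
  qed
  define r where "r x = (if x \<in> B then r2 x + c else r1 x)" for x
  have rA: "r x = r1 x" if "x \<in> A" for x
    using that assms(3) unfolding r_def by auto
  have rB: "r x = r2 x + c" if "x \<in> B" for x
    using that unfolding r_def by simp
  have "inj_on r A" "inj_on r B"
    using assms(6,8) rA rB unfolding inj_on_def by auto
  moreover have "r x \<noteq> r y" if "x \<in> A" "y \<in> B" for x y
    using below[OF that] rA[OF that(1)] rB[OF that(2)] by simp
  ultimately have "inj_on r (A \<union> B)"
    by (auto simp: inj_on_Un)
  moreover have "noncrossing_order r (E1 \<union> E2)"
  proof (rule noncrossing_order_Un)
    show "noncrossing_order r E1"
      using noncrossing_order_cong[of E1 r r1] rA assms(4,7) by (simp add: subset_iff)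
    show "noncrossing_order r E2"
      using noncrossing_order_cong[of E2 r "\<lambda>x. r2 x + c"] rB assms(5,9)
      by (simp add: subset_iff noncrossing_order_add_const)
    show "r x < r y" if "x \<in> \<Union>E1" "y \<in> \<Union>E2" for x y
      using below rA rB subsetD[OF assms(4) that(1)] subsetD[OF assms(5) that(2)] by simp
  qed
  ultimately show thesis
    by (rule that)
qed

lemma noncrossing_order_add_leaf:
  assumes "finite V" "u \<in> V" "v \<notin> V" "\<Union>E \<subseteq> V" "inj_on r V" "noncrossing_order r E"
  obtains r' where "inj_on r' (insert v V)" "noncrossing_order r' (insert {u, v} E)"
proof -
  define S where "S = insert (r u + 1) {r x | x. x \<in> V \<and> r u < r x}"
  have "finite S"
    unfolding S_def using assms(1) by simp
  define t where "t = (r u + Min S) / 2"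
  have "r u < Min S"
    using \<open>finite S\<close> unfolding S_def by (subst Min_gr_iff) auto
  then have t: "r u < t" "t < Min S"
    unfolding t_def by auto
  have gap: "\<not> (r u < r x \<and> r x \<le> t)" if "x \<in> V" for x
  proof
    assume "r u < r x \<and> r x \<le> t"
    then have "Min S \<le> r x"
      using \<open>finite S\<close> that unfolding S_def by (intro Min_le) auto
    then show False
      using t \<open>r u < r x \<and> r x \<le> t\<close> by linarith
  qed
  define r' where "r' = r(v := t)"
  have r'V: "r' x = r x" if "x \<in> V" for x
    using that assms(3) unfolding r'_def by auto
  have "inj_on r' V"
    using assms(5) r'V unfolding inj_on_def by auto
  moreover have "r' v \<notin> r' ` V"
    using gap t(1) r'V unfolding r'_def by fastforce
  moreover have "V - {v} = V"
    using assms(3) by simp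
  ultimately have "inj_on r' (insert v V)"
    by simp
  moreover have "noncrossing_order r' E"
    using noncrossing_order_cong[of E r' r] r'V assms(4,6) by (simp add: subset_iff)
  then have "noncrossing_order r' (insert {u, v} E)"
  proof (rule noncrossing_order_insert_adjacent)
    show "r' u < r' v"
      using r'V[OF assms(2)] t(1) unfolding r'_def by simp
    fix z assume "z \<in> \<Union>(insert {u, v} E)"
    then consider "z = v" | "z \<in> V"
      using assms(2,4) by auto
    then show "\<not> (r' u < r' z \<and> r' z < r' v)"
    proof cases
      case 1
      then show ?thesis
        unfolding r'_def by simp
    next
      case 2
      then show ?thesis
        using gap[of z] r'V[of z] r'V[OF assms(2)] unfolding r'_def by auto
    qed
  qed
  ultimately show thesis
    using that by blast
qed

lemma noncrossing_order_cycle: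
  assumes "inj_on f {..k}"
  shows "noncrossing_order (\<lambda>x. real (the_inv_into {..k} f x)) (cycle_edges f k)"
proof -
  define idx where "idx x = the_inv_into {..k} f x" for x
  have idx: "idx (f i) = i" if "i \<le> k" for i
    unfolding idx_def using the_inv_into_f_f[OF assms] that by simp
  have idx_le: "idx x \<le> k" if "e \<in> cycle_edges f k" "x \<in> e" for e x
    using that idx unfolding cycle_edges_def by auto
  have spanning: "idx x = 0 \<and> idx y = k"
    if "e \<in> cycle_edges f k" "x \<in> e" "y \<in> e" "idx x < m" "m < idx y" for e x y m
    using that idx unfolding cycle_edges_def by auto
  show ?thesis
    unfolding noncrossing_order_def idx_def[symmetric]
  proof (intro ballI notI)
    fix e e' x y z w
    assume ee: "e \<in> cycle_edges f k" "e' \<in> cycle_edges f k" "x \<in> e" "y \<in> e" "z \<in> e'" "w \<in> e'"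
      and cross: "real (idx x) < real (idx z) \<and> real (idx z) < real (idx y) \<and> real (idx y) < real (idx w)"
    then have "idx y = k"
      using spanning[OF ee(1,3,4), of "idx z"] by simp
    then show False
      using idx_le[OF ee(2,6)] cross by simp
  qed
qed

lemma noncrossing_order_exists:
  "finite V \<Longrightarrow> simple_graph V E \<Longrightarrow> \<not> has_path_with_two_chords E \<Longrightarrow>
    \<exists>r. inj_on r V \<and> noncrossing_order r E"
proof (induction "card V" arbitrary: V E rule: less_induct)
  case less
  note fin = less.prems(1) and simple = less.prems(2) and no_two = less.prems(3)
  have IH: "\<exists>r. inj_on r V' \<and> noncrossing_order r E'"
    if "V' \<subseteq> V" "V' \<noteq> V" "simple_graph V' E'" "\<not> has_path_with_two_chords E'" for V' E'
  proof -
    have "card V' < card V"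
      using that(1,2) fin by (simp add: psubset_card_mono)
    then show ?thesis
      using less.hyps that(3,4) finite_subset[OF that(1) fin] by blast
  qed
  have edges_V: "\<Union>E \<subseteq> V"
    using simple_graph_edge_subset[OF simple] by (rule Union_least)
  show ?case
  proof (cases rule: simple_graph_degree_cases[OF simple, case_names isolated leaf deg2])
    case (isolated v)
    have "simple_graph (V - {v}) E"
      using simple_graph_Diff[OF simple, of E "{v}"] isolated(2) by simp
    then obtain r where r: "inj_on r (V - {v})" "noncrossing_order r E"
      using IH[of "V - {v}" E] isolated(1) no_two by blast
    have "\<Union>E \<subseteq> V - {v}"
      using edges_V isolated(2) by auto
    moreover have "noncrossing_order (\<lambda>_. 0) {}"
      by (simp add: noncrossing_order_def)
    ultimately obtain r' where "inj_on r' ((V - {v}) \<union> {v})" "noncrossing_order r' (E \<union> {})"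
      using noncrossing_order_disjoint_union[of "V - {v}" "{v}" E "{}" r "\<lambda>_. 0"] r fin by auto
    moreover have "(V - {v}) \<union> {v} = V"
      using isolated(1) by auto
    ultimately show ?thesis
      by auto
  next
    case (leaf v u)
    then have vu: "{v, u} \<in> E"
      by blast
    then have u: "u \<in> V - {v}"
      using simple_graph_edge_neq[OF simple vu] simple_graph_edge_subset[OF simple vu] by auto
    have "simple_graph (V - {v}) (E - {{v, u}})"
      using simple_graph_Diff[OF simple, of "E - {{v, u}}" "{v}"] leaf(2) by blast
    moreover have "\<not> has_path_with_two_chords (E - {{v, u}})"
      using no_two has_path_with_two_chords_mono by blast
    ultimately obtain r where r: "inj_on r (V - {v})" "noncrossing_order r (E - {{v, u}})"
      using IH[of "V - {v}" "E - {{v, u}}"] leaf(1) by blast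
    have "\<Union>(E - {{v, u}}) \<subseteq> V - {v}"
      using edges_V leaf(2) by auto
    with fin u obtain r' where "inj_on r' (insert v (V - {v}))"
        "noncrossing_order r' (insert {u, v} (E - {{v, u}}))"
      using noncrossing_order_add_leaf[of "V - {v}" u v "E - {{v, u}}" r] r by auto
    moreover have "insert v (V - {v}) = V"
      using leaf(1) by auto
    moreover have "insert {u, v} (E - {{v, u}}) = E"
      using insert_Diff[OF vu] by (simp add: insert_commute)
    ultimately show ?thesis
      by auto
  next
    case deg2
    show ?thesis
    proof (cases "V = {}")
      case True
      then show ?thesis
        using edges_V simple unfolding simple_graph_def by (auto simp: noncrossing_order_def)
    next
      case False
      obtain f k where path: "graph_path E f k" and fV: "f ` {..k} \<subseteq> V"
        and cyc: "cycle_edges f k \<subseteq> E" and closed: "\<forall>e\<in>E. e \<inter> f ` {..k} \<noteq> {} \<longrightarrow> e \<in> cycle_edges f k"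
        by (rule cycle_component[OF fin False simple no_two deg2])
      define C where "C = f ` {..k}"
      have "simple_graph (V - C) (E - cycle_edges f k)"
        using simple_graph_Diff[OF simple, of "E - cycle_edges f k" C] closed unfolding C_def by blast
      moreover have "\<not> has_path_with_two_chords (E - cycle_edges f k)"
        using no_two has_path_with_two_chords_mono by blast
      moreover have "f 0 \<in> C" "C \<subseteq> V"
        using fV unfolding C_def by auto
      ultimately obtain r where r: "inj_on r (V - C)" "noncrossing_order r (E - cycle_edges f k)"
        using IH[of "V - C" "E - cycle_edges f k"] by blast
      have sub1: "\<Union>(E - cycle_edges f k) \<subseteq> V - C"
        using edges_V closed unfolding C_def by auto
      have sub2: "\<Union>(cycle_edges f k) \<subseteq> C"
        unfolding C_def cycle_edges_def by auto
      have inj_idx: "inj_on (\<lambda>x. real (the_inv_into {..k} f x)) C"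
        using inj_on_the_inv_into[of f "{..k}"] path unfolding C_def graph_path_def inj_on_def by simp
      have nc_idx: "noncrossing_order (\<lambda>x. real (the_inv_into {..k} f x)) (cycle_edges f k)"
        using noncrossing_order_cycle path unfolding graph_path_def by blast
      have "finite (V - C)" "finite C" "(V - C) \<inter> C = {}"
        using fin unfolding C_def by auto
      then obtain r' where "inj_on r' ((V - C) \<union> C)"
          "noncrossing_order r' ((E - cycle_edges f k) \<union> cycle_edges f k)"
        by (rule noncrossing_order_disjoint_union[OF _ _ _ sub1 sub2 r inj_idx nc_idx])
      moreover have "(V - C) \<union> C = V" "(E - cycle_edges f k) \<union> cycle_edges f k = E"
        using fV cyc unfolding C_def by auto
      ultimately show ?thesis
        by auto
    qed
  qed
qed

definition parabola_point :: "real \<Rightarrow> real \<Rightarrow> real \<Rightarrow> real^2" where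
  "parabola_point a b X = vector [X, (X - a) * (b - X)]"

definition parabola_arc :: "real \<Rightarrow> real \<Rightarrow> real \<Rightarrow> real^2" where
  "parabola_arc a b t = parabola_point a b ((b - a) * t + a)"

lemma vector2_eq_iff: "(vector [x, y] :: real^2) = vector [x', y'] \<longleftrightarrow> x = x' \<and> y = y'"
  by (metis vector_2 vec_eq_iff forall_2)

lemma vector2_eq_scaleR: "(vector [x, y] :: real^2) = x *\<^sub>R vector [1, 0] + y *\<^sub>R vector [0, 1]"
  by (simp add: vec_eq_iff forall_2)

lemma path_parabola_arc: "path (parabola_arc a b)"
  unfolding path_def parabola_arc_def parabola_point_def
  by (subst vector2_eq_scaleR) (intro continuous_intros)

lemma arc_parabola_arc: "a < b \<Longrightarrow> arc (parabola_arc a b)"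
  unfolding arc_def using path_parabola_arc
  by (auto simp: inj_on_def parabola_arc_def parabola_point_def vector2_eq_iff)

lemma pathstart_parabola_arc: "pathstart (parabola_arc a b) = vector [a, 0]"
  by (simp add: pathstart_def parabola_arc_def parabola_point_def)

lemma pathfinish_parabola_arc: "pathfinish (parabola_arc a b) = vector [b, 0]"
  by (simp add: pathfinish_def parabola_arc_def parabola_point_def)

lemma path_image_parabola_arc:
  assumes "a \<le> b"
  shows "path_image (parabola_arc a b) = parabola_point a b ` {a..b}"
proof -
  have "(\<lambda>t. (b - a) * t + a) ` {0..1} = {a..b}"
    using assms by (simp add: image_affinity_atLeastAtMost)
  then show ?thesis
    unfolding path_image_def parabola_arc_def by (metis image_image)
qed

lemma axis_point_in_parabola_arc:
  assumes "a < b"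
  shows "vector [X, 0] \<in> path_image (parabola_arc a b) \<longleftrightarrow> X = a \<or> X = b"
  using assms by (auto simp: path_image_parabola_arc parabola_point_def vector2_eq_iff image_iff)

lemma nested_parabolas_meet:
  fixes a b c d X :: real
  assumes "c \<le> a" "a < b" "b \<le> d" "(a, b) \<noteq> (c, d)" "a \<le> X" "X \<le> b"
    and "(X - a) * (b - X) = (X - c) * (d - X)"
  shows "X = a \<or> X = b"
proof (rule ccontr)
  assume "\<not> (X = a \<or> X = b)"
  then have "0 < X - a" "0 < b - X"
    using assms(5,6) by auto
  moreover have "(X - c) * (d - X) - (X - a) * (b - X) = (a - c) * (d - X) + (X - a) * (d - b)"
    by (simp add: algebra_simps)
  moreover have "0 \<le> (a - c) * (d - X)" "0 \<le> (X - a) * (d - b)"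
    using assms(1,3,6) \<open>0 < X - a\<close> by simp_all
  ultimately have "(a - c) * (d - X) = 0" "(X - a) * (d - b) = 0"
    using assms(7) by linarith+
  then have "a = c" "b = d"
    using \<open>0 < X - a\<close> \<open>0 < b - X\<close> by auto
  then show False
    using assms(4) by simp
qed

lemma noncrossing_parabolas_meet:
  fixes a b c d X :: real
  assumes "a < b" "c < d" "\<not> (a < c \<and> c < b \<and> b < d)" "\<not> (c < a \<and> a < d \<and> d < b)" "(a, b) \<noteq> (c, d)"
    and "X \<in> {a..b}" "X \<in> {c..d}" "(X - a) * (b - X) = (X - c) * (d - X)"
  shows "X \<in> {a, b} \<inter> {c, d}"
proof -
  have zero_iff: "(X - a) * (b - X) = 0 \<longleftrightarrow> X = a \<or> X = b" "(X - c) * (d - X) = 0 \<longleftrightarrow> X = c \<or> X = d"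
    by auto
  consider "b \<le> c" | "d \<le> a" | "c \<le> a" "b \<le> d" | "a \<le> c" "d \<le> b"
    using assms(1-4) by linarith
  then show ?thesis
  proof cases
    case 3
    then have "X = a \<or> X = b"
      using nested_parabolas_meet[of c a b d X] assms by auto
    then show ?thesis
      using zero_iff assms(8) by auto
  next
    case 4
    then have "X = c \<or> X = d"
      using nested_parabolas_meet[of a c d b X] assms by auto
    then show ?thesis
      using zero_iff assms(8) by auto
  qed (use assms in auto)
qed

lemma parabola_arcs_meet:
  assumes "a < b" "c < d" "\<not> (a < c \<and> c < b \<and> b < d)" "\<not> (c < a \<and> a < d \<and> d < b)" "(a, b) \<noteq> (c, d)"
  shows "path_image (parabola_arc a b) \<inter> path_image (parabola_arc c d) \<subseteq> (\<lambda>X. vector [X, 0]) ` ({a, b} \<inter> {c, d})"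
proof
  fix p assume "p \<in> path_image (parabola_arc a b) \<inter> path_image (parabola_arc c d)"
  then obtain X Y where XY: "X \<in> {a..b}" "Y \<in> {c..d}" "p = parabola_point a b X" "p = parabola_point c d Y"
    using assms(1,2) by (auto simp: path_image_parabola_arc)
  then have "Y = X" "(X - a) * (b - X) = (X - c) * (d - X)"
    by (auto simp: parabola_point_def vector2_eq_iff)
  then have "X \<in> {a, b} \<inter> {c, d}"
    using noncrossing_parabolas_meet[OF assms XY(1)] XY(2) by simp
  moreover have "p = vector [X, 0]"
    using XY(3) calculation by (auto simp: parabola_point_def)
  ultimately show "p \<in> (\<lambda>X. vector [X, 0]) ` ({a, b} \<inter> {c, d})"
    by blast
qed

lemma simple_graph_edge_values:
  fixes r :: "'a \<Rightarrow> real"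
  assumes "simple_graph V E" "inj_on r V" "e \<in> E"
  shows "Min (r ` e) < Max (r ` e)" "r ` e = {Min (r ` e), Max (r ` e)}" "e \<subseteq> V"
proof -
  obtain x y where xy: "x \<noteq> y" "e = {x, y}" "x \<in> V" "y \<in> V"
    using assms(1,3) unfolding simple_graph_def by blast
  then have "r x \<noteq> r y"
    using assms(2) unfolding inj_on_def by blast
  obtain a b where ab: "e = {a, b}" "r a < r b"
  proof (cases "r x < r y")
    case True
    then show thesis
      using that[of x y] xy(2) by simp
  next
    case False
    then have "r y < r x"
      using \<open>r x \<noteq> r y\<close> by simp
    then show thesis
      using that[of y x] xy(2) by (simp add: insert_commute)
  qed
  then show "Min (r ` e) < Max (r ` e)" "r ` e = {Min (r ` e), Max (r ` e)}"
    by simp_all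
  show "e \<subseteq> V"
    using xy by simp
qed

lemma planar_graph_if_noncrossing_order:
  assumes simple: "simple_graph V E" and inj: "inj_on r V" and nc: "noncrossing_order r E"
  shows "planar_graph V E"
proof -
  define axis :: "real \<Rightarrow> real^2" where "axis = (\<lambda>X. vector [X, 0])"
  define pos where "pos x = axis (r x)" for x
  define lo where "lo e = Min (r ` e)" for e
  define hi where "hi e = Max (r ` e)" for e
  have edge: "lo e < hi e" "r ` e = {lo e, hi e}" "e \<subseteq> V" if "e \<in> E" for e
    using simple_graph_edge_values[OF simple inj that] unfolding lo_def hi_def by auto
  have inj_axis: "inj axis"
    unfolding axis_def by (rule injI) (simp add: vector2_eq_iff)
  have pos_image: "pos ` A = axis ` r ` A" for A
    unfolding pos_def by (simp add: image_image)
  have arc_axis: "axis X \<in> path_image (parabola_arc (lo e) (hi e)) \<longleftrightarrow> X \<in> r ` e" if "e \<in> E" for e X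
    using axis_point_in_parabola_arc[OF edge(1)[OF that]] edge(2)[OF that] unfolding axis_def by auto
  show ?thesis
    unfolding planar_graph_def
  proof (intro exI[of _ pos] exI[of _ "\<lambda>e. parabola_arc (lo e) (hi e)"] conjI ballI impI)
    show "inj_on pos V"
      using inj inj_axis unfolding pos_def inj_on_def by (auto dest: injD)
  next
    fix e assume e: "e \<in> E"
    show "arc (parabola_arc (lo e) (hi e))"
      using arc_parabola_arc edge(1)[OF e] .
    show "{pathstart (parabola_arc (lo e) (hi e)), pathfinish (parabola_arc (lo e) (hi e))} = pos ` e"
      using edge(2)[OF e] unfolding pos_image pathstart_parabola_arc pathfinish_parabola_arc axis_def
      by simp
    have "pos x \<in> path_image (parabola_arc (lo e) (hi e)) \<longleftrightarrow> x \<in> e" if "x \<in> V" for x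
      using arc_axis[OF e] inj_on_image_mem_iff[OF inj that edge(3)[OF e]] unfolding pos_def by simp
    then show "path_image (parabola_arc (lo e) (hi e)) \<inter> pos ` V = pos ` e"
      using edge(3)[OF e] by auto
  next
    fix e e' assume e: "e \<in> E" and e': "e' \<in> E" and "e \<noteq> e'"
    have "r ` e \<noteq> r ` e'"
      using \<open>e \<noteq> e'\<close> inj_on_image_eq_iff[OF inj edge(3)[OF e] edge(3)[OF e']] by simp
    then have distinct: "(lo e, hi e) \<noteq> (lo e', hi e')"
      using edge(2)[OF e] edge(2)[OF e'] by auto
    moreover obtain x y where "x \<in> e" "r x = lo e" "y \<in> e" "r y = hi e"
      using edge(2)[OF e] by (metis imageE insertI1 insertI2)
    moreover obtain z w where "z \<in> e'" "r z = lo e'" "w \<in> e'" "r w = hi e'"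
      using edge(2)[OF e'] by (metis imageE insertI1 insertI2)
    ultimately have noncross: "\<not> (lo e < lo e' \<and> lo e' < hi e \<and> hi e < hi e')" "\<not> (lo e' < lo e \<and> lo e < hi e' \<and> hi e' < hi e)"
      using noncrossing_orderD[OF nc e e', of x y z w] noncrossing_orderD[OF nc e' e, of z w x y] by simp_all
    have "path_image (parabola_arc (lo e) (hi e)) \<inter> path_image (parabola_arc (lo e') (hi e'))
        \<subseteq> axis ` ({lo e, hi e} \<inter> {lo e', hi e'})"
      unfolding axis_def by (rule parabola_arcs_meet[OF edge(1)[OF e] edge(1)[OF e'] noncross distinct])
    also have "\<dots> = axis ` (r ` e \<inter> r ` e')"
      using edge(2)[OF e] edge(2)[OF e'] by simp
    also have "\<dots> = pos ` (e \<inter> e')"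
      using inj_on_image_Int[OF inj edge(3)[OF e] edge(3)[OF e']] pos_image by simp
    finally show "path_image (parabola_arc (lo e) (hi e)) \<inter> path_image (parabola_arc (lo e') (hi e'))
        \<subseteq> pos ` (e \<inter> e')" .
  qed
qed

lemma planar_graph_if_no_path_with_two_chords:
  assumes "finite V" "simple_graph V E" "\<not> has_path_with_two_chords E"
  shows "planar_graph V E"
  using noncrossing_order_exists[OF assms] planar_graph_if_noncrossing_order[OF assms(2)] by blast

lemma bip_edges_simple: "simple_graph (bip_vertices n1 n2) (bip_edges n1 n2 X)"
  unfolding simple_graph_def bip_edges_def bip_vertices_def by auto

lemma finite_bip_vertices: "finite (bip_vertices n1 n2)"
  unfolding bip_vertices_def by simp

lemma card_bip_vertices: "card (bip_vertices n1 n2) = n1 + n2"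
  unfolding bip_vertices_def by (subst card_Un_disjoint) (auto simp: card_image)

definition bip_side :: "nat \<Rightarrow> nat \<Rightarrow> bool \<Rightarrow> (nat + nat) set" where
  "bip_side n1 n2 left = (if left then Inl ` {..<n1} else Inr ` {..<n2})"

lemma bip_edge_sides:
  assumes "{u, w} \<in> bip_edges n1 n2 X" "u \<in> bip_side n1 n2 left"
  shows "w \<in> bip_side n1 n2 (\<not> left)"
proof -
  obtain i j where "{u, w} = {Inl i, Inr j}" "i < n1" "j < n2"
    using assms(1) unfolding bip_edges_def by blast
  then show ?thesis
    using assms(2) unfolding bip_side_def by (auto simp: doubleton_eq_iff split: if_splits)
qed

lemma bip_path_alternates:
  assumes "graph_path (bip_edges n1 n2 X) g k" "g 0 \<in> bip_side n1 n2 s" "t \<le> k"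
  shows "g t \<in> bip_side n1 n2 (even t = s)"
  using assms(3)
proof (induction t)
  case 0
  then show ?case
    using assms(2) by simp
next
  case (Suc t)
  then have "{g t, g (Suc t)} \<in> bip_edges n1 n2 X"
    using assms(1) unfolding graph_path_def by simp
  moreover have "g t \<in> bip_side n1 n2 (even t = s)"
    using Suc by simp
  ultimately have "g (Suc t) \<in> bip_side n1 n2 (\<not> (even t = s))"
    by (rule bip_edge_sides)
  then show ?case
    by (cases s) simp_all
qed

definition alternating_seqs :: "nat \<Rightarrow> nat \<Rightarrow> bool \<Rightarrow> nat \<Rightarrow> (nat \<Rightarrow> nat + nat) set" where
  "alternating_seqs n1 n2 s k = PiE {..k} (\<lambda>t. bip_side n1 n2 (even t = s))"

lemma finite_alternating_seqs: "finite (alternating_seqs n1 n2 s k)"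
  unfolding alternating_seqs_def bip_side_def by (intro finite_PiE) auto

lemma card_alternating_seqs:
  "card (alternating_seqs n1 n2 s k) = (\<Prod>t\<le>k. if even t = s then n1 else n2)"
  unfolding alternating_seqs_def
  by (subst card_PiE) (auto simp: bip_side_def card_image intro!: prod.cong)

lemma graph_path_cong:
  assumes "\<And>t. t \<le> k \<Longrightarrow> g t = g' t"
  shows "graph_path E g k \<longleftrightarrow> graph_path E g' k"
proof -
  have "inj_on g {..k} \<longleftrightarrow> inj_on g' {..k}"
    using assms by (intro inj_on_cong) simp
  moreover have "(\<forall>t<k. {g t, g (Suc t)} \<in> E) \<longleftrightarrow> (\<forall>t<k. {g' t, g' (Suc t)} \<in> E)"
    using assms by simp
  ultimately show ?thesis
    unfolding graph_path_def by simp
qed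

lemma path_chord_cong:
  assumes "\<And>t. t \<le> k \<Longrightarrow> g t = g' t"
  shows "path_chord E g k a b \<longleftrightarrow> path_chord E g' k a b"
proof (cases "a + 2 \<le> b \<and> b \<le> k")
  case True
  then have "g a = g' a" "g b = g' b"
    using assms by simp_all
  then show ?thesis
    unfolding path_chord_def by simp
qed (auto simp: path_chord_def)

definition two_chord_event ::
    "nat \<Rightarrow> nat \<Rightarrow> (nat \<Rightarrow> nat + nat) \<Rightarrow> nat \<Rightarrow> nat \<Rightarrow> nat \<Rightarrow> nat \<Rightarrow> nat \<Rightarrow> (nat \<times> nat \<Rightarrow> bool) set" where
  "two_chord_event n1 n2 g k a b c d =
     {X. graph_path (bip_edges n1 n2 X) g k \<and> path_chord (bip_edges n1 n2 X) g k a b \<and>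
         path_chord (bip_edges n1 n2 X) g k c d \<and> (a, b) \<noteq> (c, d)}"

lemma has_path_with_two_chords_bip_cover:
  "{X. has_path_with_two_chords (bip_edges n1 n2 X)} \<subseteq>
     (\<Union>k<n1 + n2. \<Union>s\<in>UNIV. \<Union>g\<in>alternating_seqs n1 n2 s k. \<Union>a\<le>k. \<Union>b\<le>k. \<Union>c\<le>k. \<Union>d\<le>k.
        two_chord_event n1 n2 g k a b c d)"
proof
  fix X assume "X \<in> {X. has_path_with_two_chords (bip_edges n1 n2 X)}"
  then obtain f k a b c d where path: "graph_path (bip_edges n1 n2 X) f k"
    and chords: "path_chord (bip_edges n1 n2 X) f k a b" "path_chord (bip_edges n1 n2 X) f k c d" "(a, b) \<noteq> (c, d)"
    unfolding has_path_with_two_chords_def by blast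
  have edge_vertices: "f t \<in> bip_vertices n1 n2 \<and> f (Suc t) \<in> bip_vertices n1 n2" if "t < k" for t
  proof -
    have "{f t, f (Suc t)} \<in> bip_edges n1 n2 X"
      using path that unfolding graph_path_def by simp
    then have "{f t, f (Suc t)} \<subseteq> bip_vertices n1 n2"
      by (rule simple_graph_edge_subset[OF bip_edges_simple])
    then show ?thesis
      by simp
  qed
  have "0 < k"
    using chords(1) unfolding path_chord_def by simp
  have vertices: "f t \<in> bip_vertices n1 n2" if "t \<le> k" for t
  proof (cases "t < k")
    case True
    then show ?thesis
      using edge_vertices by blast
  next
    case False
    then have "t = Suc (k - 1)"
      using that \<open>0 < k\<close> by simp
    then show ?thesis
      using edge_vertices[of "k - 1"] \<open>0 < k\<close> by simp
  qed
  have "card {..k} \<le> card (bip_vertices n1 n2)"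
    using path vertices unfolding graph_path_def
    by (intro card_inj_on_le) (auto simp: finite_bip_vertices)
  then have k: "k < n1 + n2"
    by (simp add: card_bip_vertices)
  define s where "s = (f 0 \<in> Inl ` {..<n1})"
  have "f 0 \<in> bip_side n1 n2 s"
    using vertices[of 0]
    unfolding s_def bip_side_def bip_vertices_def by auto
  then have "restrict f {..k} \<in> alternating_seqs n1 n2 s k"
    using bip_path_alternates[OF path] unfolding alternating_seqs_def by auto
  moreover have "X \<in> two_chord_event n1 n2 (restrict f {..k}) k a b c d"
    unfolding two_chord_event_def
    using path chords graph_path_cong[of k "restrict f {..k}" f] path_chord_cong[of k "restrict f {..k}" f]
    by simp
  moreover have "a \<le> k" "b \<le> k" "c \<le> k" "d \<le> k"
    using chords unfolding path_chord_def by auto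
  ultimately show "X \<in> (\<Union>k<n1 + n2. \<Union>s\<in>UNIV. \<Union>g\<in>alternating_seqs n1 n2 s k. \<Union>a\<le>k. \<Union>b\<le>k. \<Union>c\<le>k. \<Union>d\<le>k.
        two_chord_event n1 n2 g k a b c d)"
    using k by (intro UN_I[of k] UN_I[of s] UN_I[of "restrict f {..k}"] UN_I[of a] UN_I[of b] UN_I[of c] UN_I[of d]) auto
qed

lemma prob_Pi_pmf_bernoulli_all:
  assumes "finite A" "S \<subseteq> A" "0 \<le> p" "p \<le> 1"
  shows "measure_pmf.prob (Pi_pmf A False (\<lambda>_. bernoulli_pmf p)) {X. \<forall>s\<in>S. X s} = p ^ card S"
proof -
  define B where "B x = (if x \<in> S then {True} else UNIV)" for x
  have "{X. \<forall>s\<in>S. X s} = Pi A B"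
    unfolding B_def Pi_def using assms(2) by auto
  then have "measure_pmf.prob (Pi_pmf A False (\<lambda>_. bernoulli_pmf p)) {X. \<forall>s\<in>S. X s}
      = (\<Prod>x\<in>A. measure_pmf.prob (bernoulli_pmf p) (B x))"
    using measure_Pi_pmf_Pi[OF assms(1)] by simp
  also have "\<dots> = (\<Prod>x\<in>A. if x \<in> S then p else 1)"
    by (intro prod.cong) (auto simp: B_def measure_pmf_single assms(3,4))
  also have "\<dots> = p ^ card S"
    using assms(1,2) by (subst prod.If_cases) (auto simp: Int_absorb1 Int_absorb2)
  finally show ?thesis .
qed

lemma prob_bip_edges_superset:
  assumes "0 \<le> p" "p \<le> 1"
  shows "measure_pmf.prob (random_bip n1 n2 p) {X. F \<subseteq> bip_edges n1 n2 X} \<le> p ^ card F"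
proof (cases "{X. F \<subseteq> bip_edges n1 n2 X} = {}")
  case True
  then show ?thesis
    using assms by simp
next
  case False
  then obtain X0 where X0: "F \<subseteq> bip_edges n1 n2 X0"
    by blast
  define S where "S = {(i, j). i < n1 \<and> j < n2 \<and> {Inl i, Inr j} \<in> F}"
  have "bij_betw (\<lambda>(i, j). {Inl i, Inr j} :: (nat + nat) set) S F"
    unfolding bij_betw_def
  proof
    show "inj_on (\<lambda>(i, j). {Inl i, Inr j} :: (nat + nat) set) S"
      by (auto simp: inj_on_def doubleton_eq_iff)
    show "(\<lambda>(i, j). {Inl i, Inr j}) ` S = F"
    proof (intro equalityI subsetI)
      fix e assume "e \<in> F"
      then obtain i j where "e = {Inl i, Inr j}" "i < n1" "j < n2"
        using X0 unfolding bip_edges_def by blast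
      then show "e \<in> (\<lambda>(i, j). {Inl i, Inr j}) ` S"
        using \<open>e \<in> F\<close> unfolding S_def by auto
    qed (auto simp: S_def)
  qed
  then have "card S = card F"
    by (rule bij_betw_same_card)
  have "{X. F \<subseteq> bip_edges n1 n2 X} \<subseteq> {X. \<forall>s\<in>S. X s}"
  proof (intro subsetI CollectI ballI)
    fix X s assume "X \<in> {X. F \<subseteq> bip_edges n1 n2 X}" "s \<in> S"
    then obtain i j where "s = (i, j)" "{Inl i, Inr j} \<in> bip_edges n1 n2 X"
      unfolding S_def by blast
    then show "X s"
      unfolding bip_edges_def by (auto simp: doubleton_eq_iff)
  qed
  then have "measure_pmf.prob (random_bip n1 n2 p) {X. F \<subseteq> bip_edges n1 n2 X}
      \<le> measure_pmf.prob (random_bip n1 n2 p) {X. \<forall>s\<in>S. X s}"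
    by (rule measure_pmf.finite_measure_mono) simp
  also have "\<dots> = p ^ card S"
    unfolding random_bip_def by (rule prob_Pi_pmf_bernoulli_all) (auto simp: S_def assms)
  finally show ?thesis
    using \<open>card S = card F\<close> by simp
qed

definition path_edges :: "(nat \<Rightarrow> 'a) \<Rightarrow> nat \<Rightarrow> 'a set set" where
  "path_edges g k = (\<lambda>t. {g t, g (Suc t)}) ` {..<k}"

lemma doubleton_inj_on:
  assumes "inj_on g A" "x \<in> A" "y \<in> A" "z \<in> A" "w \<in> A" "{g x, g y} = {g z, g w}"
  shows "(x = z \<and> y = w) \<or> (x = w \<and> y = z)"
proof -
  have "(g x = g z \<and> g y = g w) \<or> (g x = g w \<and> g y = g z)"
    using assms(6) by (simp add: doubleton_eq_iff)
  then show ?thesis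
    using assms(1-5) unfolding inj_on_def by blast
qed

lemma card_path_edges_two_chords:
  assumes "inj_on g {..k}" "path_chord E g k a b" "path_chord E g k c d" "(a, b) \<noteq> (c, d)"
  shows "card (insert {g a, g b} (insert {g c, g d} (path_edges g k))) = k + 2"
proof -
  have ab: "a + 2 \<le> b" "b \<le> k" and cd: "c + 2 \<le> d" "d \<le> k"
    using assms(2,3) unfolding path_chord_def by auto
  have "inj_on (\<lambda>t. {g t, g (Suc t)}) {..<k}"
  proof (rule inj_onI)
    fix x y assume "x \<in> {..<k}" "y \<in> {..<k}" "{g x, g (Suc x)} = {g y, g (Suc y)}"
    then have "(x = y \<and> Suc x = Suc y) \<or> (x = Suc y \<and> Suc x = y)"
      by (intro doubleton_inj_on[OF assms(1)]) auto
    then show "x = y"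
      by auto
  qed
  then have card_path: "card (path_edges g k) = k"
    unfolding path_edges_def by (simp add: card_image)
  have chord_not_path: "{g x, g y} \<notin> path_edges g k" if "x + 2 \<le> y" "y \<le> k" for x y
  proof
    assume "{g x, g y} \<in> path_edges g k"
    then obtain t where "t < k" "{g x, g y} = {g t, g (Suc t)}"
      unfolding path_edges_def by auto
    then have "(x = t \<and> y = Suc t) \<or> (x = Suc t \<and> y = t)"
      using that by (intro doubleton_inj_on[OF assms(1)]) auto
    then show False
      using that by auto
  qed
  have "{g a, g b} \<noteq> {g c, g d}"
  proof
    assume "{g a, g b} = {g c, g d}"
    then have "(a = c \<and> b = d) \<or> (a = d \<and> b = c)"
      using ab cd by (intro doubleton_inj_on[OF assms(1)]) auto
    then show False
      using ab cd assms(4) by auto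
  qed
  moreover have "finite (path_edges g k)"
    unfolding path_edges_def by simp
  ultimately show ?thesis
    using chord_not_path[OF ab] chord_not_path[OF cd] card_path by simp
qed

lemma prob_two_chord_event:
  assumes "0 \<le> p" "p \<le> 1"
  shows "measure_pmf.prob (random_bip n1 n2 p) (two_chord_event n1 n2 g k a b c d) \<le> p ^ (k + 2)"
proof (cases "two_chord_event n1 n2 g k a b c d = {}")
  case True
  then show ?thesis
    using assms by simp
next
  case False
  define F where "F = insert {g a, g b} (insert {g c, g d} (path_edges g k))"
  obtain X0 where "X0 \<in> two_chord_event n1 n2 g k a b c d"
    using False by blast
  then have "inj_on g {..k}" "path_chord (bip_edges n1 n2 X0) g k a b"
    "path_chord (bip_edges n1 n2 X0) g k c d" "(a, b) \<noteq> (c, d)"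
    unfolding two_chord_event_def graph_path_def by auto
  then have "card F = k + 2"
    unfolding F_def by (rule card_path_edges_two_chords)
  have "two_chord_event n1 n2 g k a b c d \<subseteq> {X. F \<subseteq> bip_edges n1 n2 X}"
    unfolding two_chord_event_def graph_path_def path_chord_def path_edges_def F_def by auto
  then have "measure_pmf.prob (random_bip n1 n2 p) (two_chord_event n1 n2 g k a b c d)
      \<le> measure_pmf.prob (random_bip n1 n2 p) {X. F \<subseteq> bip_edges n1 n2 X}"
    by (rule measure_pmf.finite_measure_mono) simp
  also have "\<dots> \<le> p ^ (k + 2)"
    using prob_bip_edges_superset[OF assms, of n1 n2 F] \<open>card F = k + 2\<close> by simp
  finally show ?thesis .
qed

lemma prob_UN_le:
  assumes "finite I" "\<And>i. i \<in> I \<Longrightarrow> measure_pmf.prob M (A i) \<le> f i"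
  shows "measure_pmf.prob M (\<Union>i\<in>I. A i) \<le> sum f I"
proof -
  have "measure_pmf.prob M (\<Union>i\<in>I. A i) \<le> (\<Sum>i\<in>I. measure_pmf.prob M (A i))"
    by (rule measure_pmf.finite_measure_subadditive_finite[OF assms(1)]) simp
  also have "\<dots> \<le> sum f I"
    by (rule sum_mono) (rule assms(2))
  finally show ?thesis .
qed

lemma prob_has_path_with_two_chords_le_sum:
  assumes "0 \<le> p" "p \<le> 1"
  shows "measure_pmf.prob (random_bip n1 n2 p) {X. has_path_with_two_chords (bip_edges n1 n2 X)}
    \<le> (\<Sum>k<n1 + n2. \<Sum>s\<in>UNIV. real (card (alternating_seqs n1 n2 s k)) * (real k + 1) ^ 4 * p ^ (k + 2))"
proof -
  have "measure_pmf.prob (random_bip n1 n2 p) {X. has_path_with_two_chords (bip_edges n1 n2 X)}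
     \<le> measure_pmf.prob (random_bip n1 n2 p)
          (\<Union>k<n1 + n2. \<Union>s\<in>UNIV. \<Union>g\<in>alternating_seqs n1 n2 s k. \<Union>a\<le>k. \<Union>b\<le>k. \<Union>c\<le>k. \<Union>d\<le>k.
             two_chord_event n1 n2 g k a b c d)"
    by (rule measure_pmf.finite_measure_mono[OF has_path_with_two_chords_bip_cover]) simp
  also have "\<dots> \<le> (\<Sum>k<n1 + n2. \<Sum>s\<in>UNIV. \<Sum>g\<in>alternating_seqs n1 n2 s k. \<Sum>a\<le>k. \<Sum>b\<le>k. \<Sum>c\<le>k. \<Sum>d\<le>k.
      p ^ (k + 2))"
    by (intro prob_UN_le finite_lessThan finite_atMost finite_class.finite_UNIV finite_alternating_seqs
        prob_two_chord_event assms)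
  also have "\<dots> = (\<Sum>k<n1 + n2. \<Sum>s\<in>UNIV. real (card (alternating_seqs n1 n2 s k)) * (real k + 1) ^ 4 * p ^ (k + 2))"
    by (intro sum.cong refl) (simp add: power4_eq_xxxx algebra_simps)
  finally show ?thesis .
qed

lemma prod_alternating_le:
  fixes \<alpha> \<beta> \<delta> :: real
  assumes "0 \<le> \<alpha>" "0 \<le> \<beta>" "\<alpha> * \<beta> = \<delta> ^ 2" "0 \<le> \<delta>"
  shows "(\<Prod>t\<le>k. if even t = s then \<alpha> else \<beta>) \<le> \<delta> ^ k * max \<alpha> \<beta>"
proof -
  define g :: "nat \<Rightarrow> real" where "g t = (if even t = s then \<alpha> else \<beta>)" for t
  have g_nonneg: "0 \<le> g t" for t
    using assms unfolding g_def by auto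
  have pair: "g (Suc t) * g (Suc (Suc t)) = \<delta> ^ 2" for t
    using assms(3) unfolding g_def by (auto simp: mult.commute)
  have "\<delta> ^ 2 \<le> max \<alpha> \<beta> ^ 2"
    using assms(1,2,3) mult_mono[of \<alpha> "max \<alpha> \<beta>" \<beta> "max \<alpha> \<beta>"] by (simp add: power2_eq_square)
  then have \<delta>_le: "\<delta> \<le> max \<alpha> \<beta>"
    using assms(1) by (auto intro: power2_le_imp_le)
  have "(\<Prod>t\<le>k. g t) \<le> \<delta> ^ k * max \<alpha> \<beta> \<and> (\<Prod>t\<le>Suc k. g t) \<le> \<delta> ^ Suc k * max \<alpha> \<beta>"
  proof (induction k)
    case 0
    have "g 0 \<le> max \<alpha> \<beta>" "g 0 * g 1 = \<delta> ^ 2"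
      using assms(3) unfolding g_def by (auto simp: mult.commute)
    moreover have "\<delta> ^ 2 \<le> \<delta> * max \<alpha> \<beta>"
      using \<delta>_le assms(4) by (simp add: power2_eq_square mult_left_mono)
    ultimately show ?case
      by simp
  next
    case (Suc k)
    have "(\<Prod>t\<le>Suc (Suc k). g t) = (\<Prod>t\<le>k. g t) * (g (Suc k) * g (Suc (Suc k)))"
      by (simp add: mult.assoc)
    also have "\<dots> = (\<Prod>t\<le>k. g t) * \<delta> ^ 2"
      using pair by simp
    also have "\<dots> \<le> \<delta> ^ k * max \<alpha> \<beta> * \<delta> ^ 2"
      using Suc.IH by (intro mult_right_mono) auto
    also have "\<dots> = \<delta> ^ Suc (Suc k) * max \<alpha> \<beta>"
      by (simp add: power2_eq_square algebra_simps)
    finally show ?case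
      using Suc.IH by simp
  qed
  then show ?thesis
    unfolding g_def by blast
qed

lemma alternating_seqs_weight_le:
  fixes d :: real
  assumes "1 \<le> n1" "n1 \<le> n2" "0 < d"
  shows "real (card (alternating_seqs n1 n2 s k)) * (d / sqrt (real n1 * real n2)) ^ (k + 2)
    \<le> d ^ k * (d ^ 2 / real n1)"
proof -
  define p where "p = d / sqrt (real n1 * real n2)"
  have pos: "0 < real n1" "0 < real n2"
    using assms(1,2) by auto
  then have "0 \<le> p"
    unfolding p_def using assms(3) by simp
  have p2: "p ^ 2 = d ^ 2 / (real n1 * real n2)"
    unfolding p_def using pos by (simp add: power_divide)
  define \<alpha> where "\<alpha> = real n1 * p"
  define \<beta> where "\<beta> = real n2 * p"
  have "0 \<le> \<alpha>" "0 \<le> \<beta>"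
    unfolding \<alpha>_def \<beta>_def using \<open>0 \<le> p\<close> by simp_all
  have "\<alpha> * \<beta> = d ^ 2"
    unfolding \<alpha>_def \<beta>_def using p2 pos by (simp add: power2_eq_square field_simps)
  have "max \<alpha> \<beta> = \<beta>"
    unfolding \<alpha>_def \<beta>_def using assms(2) \<open>0 \<le> p\<close> by (simp add: mult_right_mono)
  have "real (card (alternating_seqs n1 n2 s k)) = (\<Prod>t\<le>k. if even t = s then real n1 else real n2)"
    unfolding card_alternating_seqs of_nat_prod by (intro prod.cong) auto
  then have "real (card (alternating_seqs n1 n2 s k)) * p ^ (k + 1)
      = (\<Prod>t\<le>k. (if even t = s then real n1 else real n2) * p)"
    by (simp add: prod.distrib)
  also have "\<dots> = (\<Prod>t\<le>k. if even t = s then \<alpha> else \<beta>)"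
    unfolding \<alpha>_def \<beta>_def by (intro prod.cong) auto
  also have "\<dots> \<le> d ^ k * \<beta>"
    using prod_alternating_le[OF \<open>0 \<le> \<alpha>\<close> \<open>0 \<le> \<beta>\<close> \<open>\<alpha> * \<beta> = d ^ 2\<close>] assms(3) \<open>max \<alpha> \<beta> = \<beta>\<close> by simp
  finally have bound: "real (card (alternating_seqs n1 n2 s k)) * p ^ (k + 1) * p \<le> d ^ k * \<beta> * p"
    using \<open>0 \<le> p\<close> by (rule mult_right_mono)
  have "real (card (alternating_seqs n1 n2 s k)) * p ^ (k + 2)
      = real (card (alternating_seqs n1 n2 s k)) * p ^ (k + 1) * p"
    by simp
  also have "\<dots> \<le> d ^ k * \<beta> * p"
    by (fact bound)
  also have "\<dots> = d ^ k * (d ^ 2 / real n1)"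
    unfolding \<beta>_def using p2 pos by (simp add: power2_eq_square field_simps)
  finally show ?thesis
    by (simp only: p_def)
qed

lemma summable_poly_times_geometric:
  fixes q :: real
  assumes "0 \<le> q" "q < 1"
  shows "summable (\<lambda>k. (real k + 1) ^ m * q ^ k)"
proof (cases "q = 0")
  case True
  then show ?thesis
    by simp
next
  case False
  then have "0 < q"
    using assms(1) by simp
  define c where "c = (1 + q) / 2"
  have "c < 1" "1 < c / q"
    unfolding c_def using \<open>0 < q\<close> assms(2) by (simp_all add: field_simps)
  have "(\<lambda>n. (1 + inverse (real (Suc n))) ^ m) \<longlonglongrightarrow> (1 + 0) ^ m"
    by (intro tendsto_intros LIMSEQ_inverse_real_of_nat)
  moreover have "(real n + 2) / (real n + 1) = 1 + inverse (real (Suc n))" for n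
    by (simp add: field_simps)
  ultimately have "(\<lambda>n. ((real n + 2) / (real n + 1)) ^ m) \<longlonglongrightarrow> 1"
    by simp
  then have "eventually (\<lambda>n. ((real n + 2) / (real n + 1)) ^ m < c / q) sequentially"
    using \<open>1 < c / q\<close> by (rule order_tendstoD(2))
  then obtain N where N: "\<And>n. N \<le> n \<Longrightarrow> ((real n + 2) / (real n + 1)) ^ m < c / q"
    unfolding eventually_sequentially by blast
  show ?thesis
  proof (rule summable_ratio_test[OF \<open>c < 1\<close>])
    fix n assume "N \<le> n"
    have ratio: "((real n + 2) / (real n + 1)) ^ m * q \<le> c"
      using N[OF \<open>N \<le> n\<close>] \<open>0 < q\<close> by (simp add: field_simps)
    have "(real (Suc n) + 1) ^ m * q ^ Suc n = (((real n + 2) / (real n + 1)) ^ m * q) * ((real n + 1) ^ m * q ^ n)"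
      by (simp add: field_simps power_divide)
    also have "\<dots> \<le> c * ((real n + 1) ^ m * q ^ n)"
      by (rule mult_right_mono[OF ratio]) (use assms in simp)
    finally show "norm ((real (Suc n) + 1) ^ m * q ^ Suc n) \<le> c * norm ((real n + 1) ^ m * q ^ n)"
      using assms by simp
  qed
qed

lemma prob_has_path_with_two_chords_le:
  fixes d :: real
  assumes "1 \<le> n1" "n1 \<le> n2" "0 < d" "d < 1"
  shows "measure_pmf.prob (random_bip n1 n2 (d / sqrt (real n1 * real n2)))
           {X. has_path_with_two_chords (bip_edges n1 n2 X)}
         \<le> 2 * d ^ 2 * (\<Sum>k. (real k + 1) ^ 4 * d ^ k) / real n1"
proof -
  define p where "p = d / sqrt (real n1 * real n2)"
  have "real n1 \<le> sqrt (real n1 * real n2)"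
    using assms(1,2) real_sqrt_le_mono[of "real n1 * real n1" "real n1 * real n2"] by simp
  moreover have "0 < real n1" "0 < real n2"
    using assms(1,2) by simp_all
  ultimately have "p \<le> d / real n1"
    unfolding p_def using assms(3) by (intro divide_left_mono mult_pos_pos) auto
  also have "\<dots> \<le> 1"
    using assms(1,4) by (simp add: divide_le_eq)
  finally have "p \<le> 1" .
  have "0 \<le> p"
    unfolding p_def using assms(3) by simp
  have "measure_pmf.prob (random_bip n1 n2 p) {X. has_path_with_two_chords (bip_edges n1 n2 X)}
      \<le> (\<Sum>k<n1 + n2. \<Sum>s\<in>UNIV. real (card (alternating_seqs n1 n2 s k)) * (real k + 1) ^ 4 * p ^ (k + 2))"
    by (rule prob_has_path_with_two_chords_le_sum[OF \<open>0 \<le> p\<close> \<open>p \<le> 1\<close>])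
  also have "\<dots> \<le> (\<Sum>k<n1 + n2. \<Sum>s\<in>(UNIV :: bool set). (real k + 1) ^ 4 * (d ^ k * (d ^ 2 / real n1)))"
  proof (intro sum_mono)
    fix k s
    show "real (card (alternating_seqs n1 n2 s k)) * (real k + 1) ^ 4 * p ^ (k + 2)
        \<le> (real k + 1) ^ 4 * (d ^ k * (d ^ 2 / real n1))"
    proof -
      have "real (card (alternating_seqs n1 n2 s k)) * p ^ (k + 2) \<le> d ^ k * (d ^ 2 / real n1)"
        using alternating_seqs_weight_le[OF assms(1-3), of s k] unfolding p_def .
      then have "(real k + 1) ^ 4 * (real (card (alternating_seqs n1 n2 s k)) * p ^ (k + 2))
          \<le> (real k + 1) ^ 4 * (d ^ k * (d ^ 2 / real n1))"
        by (rule mult_left_mono) simp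
      then show ?thesis
        by (simp add: mult_ac)
    qed
  qed
  also have "\<dots> = 2 * d ^ 2 / real n1 * (\<Sum>k<n1 + n2. (real k + 1) ^ 4 * d ^ k)"
    by (simp add: sum_distrib_left mult_ac)
  also have "\<dots> \<le> 2 * d ^ 2 / real n1 * (\<Sum>k. (real k + 1) ^ 4 * d ^ k)"
    using summable_poly_times_geometric[of d 4] assms(3,4)
    by (intro mult_left_mono sum_le_suminf) auto
  finally show ?thesis
    unfolding p_def by simp
qed

lemma prob_planar_bip_ge:
  "1 - measure_pmf.prob (random_bip n1 n2 p) {X. has_path_with_two_chords (bip_edges n1 n2 X)}
     \<le> measure_pmf.prob (random_bip n1 n2 p) {X. planar_graph (bip_vertices n1 n2) (bip_edges n1 n2 X)}"
proof -
  let ?M = "random_bip n1 n2 p"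
  have "{X. \<not> has_path_with_two_chords (bip_edges n1 n2 X)}
      = space (measure_pmf ?M) - {X. has_path_with_two_chords (bip_edges n1 n2 X)}"
    by auto
  then have "1 - measure_pmf.prob ?M {X. has_path_with_two_chords (bip_edges n1 n2 X)}
      = measure_pmf.prob ?M {X. \<not> has_path_with_two_chords (bip_edges n1 n2 X)}"
    using measure_pmf.prob_compl[of "{X. has_path_with_two_chords (bip_edges n1 n2 X)}" ?M] by simp
  also have "\<dots> \<le> measure_pmf.prob ?M {X. planar_graph (bip_vertices n1 n2) (bip_edges n1 n2 X)}"
    using planar_graph_if_no_path_with_two_chords[OF finite_bip_vertices bip_edges_simple]
    by (intro measure_pmf.finite_measure_mono) auto
  finally show ?thesis .
qed

theorem theorem1p3:
  fixes n1 n2 :: "nat \<Rightarrow> nat" and d :: real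
  assumes "filterlim n1 at_top sequentially"
    and "\<And>n. n1 n \<le> n2 n"
    and "0 < d" and "d < 1"
  shows "(\<lambda>n. measure_pmf.prob (random_bip (n1 n) (n2 n) (d / sqrt (real (n1 n) * real (n2 n))))
            {X. planar_graph (bip_vertices (n1 n) (n2 n)) (bip_edges (n1 n) (n2 n) X)})
         \<longlonglongrightarrow> 1"
proof -
  define P where "P n = measure_pmf.prob (random_bip (n1 n) (n2 n) (d / sqrt (real (n1 n) * real (n2 n))))
    {X. planar_graph (bip_vertices (n1 n) (n2 n)) (bip_edges (n1 n) (n2 n) X)}" for n
  define C where "C = 2 * d ^ 2 * (\<Sum>k. (real k + 1) ^ 4 * d ^ k)"
  have "eventually (\<lambda>n. 1 \<le> n1 n) sequentially"
    using assms(1) unfolding filterlim_at_top by blast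
  then have lower: "eventually (\<lambda>n. 1 - C / real (n1 n) \<le> P n) sequentially"
  proof (rule eventually_mono)
    fix n assume "1 \<le> n1 n"
    from prob_has_path_with_two_chords_le[OF this assms(2-4)] prob_planar_bip_ge
    show "1 - C / real (n1 n) \<le> P n"
      unfolding P_def C_def by (meson diff_left_mono order_trans)
  qed
  have upper: "eventually (\<lambda>n. P n \<le> 1) sequentially"
    unfolding P_def by (intro always_eventually allI measure_pmf.prob_le_1)
  have "filterlim (\<lambda>n. real (n1 n)) at_infinity sequentially"
    using filterlim_compose[OF filterlim_real_sequentially assms(1)] by (rule filterlim_at_top_imp_at_infinity)
  then have "(\<lambda>n. C / real (n1 n)) \<longlonglongrightarrow> 0"
    by (rule tendsto_divide_0[OF tendsto_const])
  then have "(\<lambda>n. 1 - C / real (n1 n)) \<longlonglongrightarrow> 1 - 0"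
    by (intro tendsto_diff tendsto_const)
  then have "P \<longlonglongrightarrow> 1"
    using tendsto_sandwich[OF lower upper _ tendsto_const] by simp
  then show ?thesis
    unfolding P_def .
qed

end
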